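(* Let $k\ge 2$ be an integer. For any positive integer $N$, \[ \widetilde{Z}_k(N)=\sum_{\substack{c\in\mathbb{N}\\ N\mid c}} z_k(c), \qquad\text{where}\qquad z_k(c):=\sum_{\substack{r\in\mathbb{N}\\ r\ge c}}\ \sum_{d\in\mathbb{N}}\mu(d)\,\mu_{k+1}(dr)\prod_{p\mid dr}\frac{1}{(p^k-1)^2}. \]
   Context: $\mu$ is the Möbius function, $\mu_{k+1}(q)$ is the indicator function of the $(k+1)$-free positive integers, and $p$ always denotes a prime. For $N\in\mathbb{N}$, \[ \widetilde{Z}_k(N):=\sum_{q\in\mathbb{N}}\mu_{k+1}(q)\Bigl(\prod_{p\mid q}\frac{1}{(p^k-1)^2}\Bigr)\#\{m\in\mathbb{N}\cap[1,q/N]:\gcd(m,q)=1\}. \] *)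

theory Defs
  imports "HOL-Analysis.Analysis" "HOL-Computational_Algebra.Computational_Algebra"
begin

definition mobius :: "nat \<Rightarrow> real" where
  "mobius n = (if n = 0 then 0 else if squarefree n then (-1) ^ card (prime_factors n) else 0)"

definition free_ind :: "nat \<Rightarrow> nat \<Rightarrow> real" where
  "free_ind j n = (if n \<ge> 1 \<and> (\<forall>p. prime p \<longrightarrow> \<not> p ^ j dvd n) then 1 else 0)"

definition wprod :: "nat \<Rightarrow> nat \<Rightarrow> real" where
  "wprod k n = (\<Prod>p\<in>prime_factors n. 1 / (real p ^ k - 1)\<^sup>2)"

definition Ztilde :: "nat \<Rightarrow> nat \<Rightarrow> real" where
  "Ztilde k N = (\<Sum>\<^sub>\<infinity>q\<in>{1..}. free_ind (k+1) q * wprod k q *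
      real (card {m::nat. 1 \<le> m \<and> real m \<le> real q / real N \<and> coprime m q}))"

definition zk :: "nat \<Rightarrow> nat \<Rightarrow> real" where
  "zk k c = (\<Sum>\<^sub>\<infinity>r\<in>{r. r \<ge> 1 \<and> r \<ge> c}. \<Sum>\<^sub>\<infinity>d\<in>{1..}.
      mobius d * free_ind (k+1) (d * r) * wprod k (d * r))"

end

theory Submission
  imports Defs
begin

(* Substituting q = d * r turns the triple sum over (c, r, d) into a sum over q of
   free_ind (k+1) q * wprod k q times the sum of mobius d over the pairs (d, c) with
   d dvd q, N dvd c and c * d <= q.  Grouping these pairs by m = c * d / N and using
   that mobius sums to [gcd m q = 1] over the divisors of gcd m q leaves the number of
   m <= q / N coprime to q, which is the summand of Ztilde.  The rearrangements are
   justified by absolute convergence: there are at most q * tau(q) pairs, and the sum of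
   wprod k q * q * tau(q) over (k+1)-free q is bounded by an Euler product whose factors
   are 1 + O(k^2 / p^2), which converges because k >= 2. *)

lemma free_ind_nonneg: "free_ind j n \<ge> 0"
  by (simp add: free_ind_def)

lemma free_ind_multiplicity_le:
  assumes "free_ind (k + 1) q = 1" "prime p"
  shows "multiplicity p q \<le> k"
proof (rule ccontr)
  assume "\<not> multiplicity p q \<le> k"
  then have "p ^ (k + 1) dvd q"
    by (intro multiplicity_dvd') simp
  with assms show False
    by (auto simp: free_ind_def split: if_splits)
qed

lemma wprod_nonneg: "wprod k n \<ge> 0"
  unfolding wprod_def by (intro prod_nonneg) auto

lemma abs_mobius_le: "\<bar>mobius n\<bar> \<le> 1"
  by (simp add: mobius_def)

lemma mobius_prime_mult:
  assumes "prime p" "\<not> p dvd d"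
  shows "mobius (p * d) = - mobius d"
proof -
  have "d \<noteq> 0" using assms(2) by (metis dvd_0_right)
  have "coprime p d" using assms by (rule prime_imp_coprime)
  have "squarefree (p * d) \<longleftrightarrow> squarefree d"
    using squarefree_mult_coprime[OF \<open>coprime p d\<close>] squarefree_multD[of p d]
          squarefree_prime_elem assms(1) by blast
  moreover have "prime_factors (p * d) = insert p (prime_factors d)"
    using assms \<open>d \<noteq> 0\<close> by (simp add: prime_factors_product prime_gt_0_nat prime_prime_factors)
  moreover have "p \<notin> prime_factors d" using assms(2) by auto
  ultimately show ?thesis
    using assms \<open>d \<noteq> 0\<close> by (simp add: mobius_def)
qed

lemma mobius_prime_mult_eq_0:
  assumes "prime p" "p dvd d"
  shows "mobius (p * d) = 0"
proof -
  have "p\<^sup>2 dvd p * d" using assms(2) by (simp add: power2_eq_square)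
  then have "\<not> squarefree (p * d)"
    using assms(1) by (auto simp: squarefree_def)
  then show ?thesis by (simp add: mobius_def)
qed

lemma sum_mobius_divisors:
  assumes "n > 0"
  shows "(\<Sum>d | d dvd n. mobius d) = (if n = 1 then 1 else 0)"
proof (cases "n = 1")
  case False
  then obtain p where p: "prime p" "p dvd n" using prime_factor_nat by blast
  define A where "A = {d. d dvd n \<and> \<not> p dvd d}"
  have "(\<Sum>d | d dvd n \<and> p dvd d. mobius d) = (\<Sum>e | e dvd n div p. mobius (p * e))"
    by (rule sum.reindex_bij_witness[of _ "\<lambda>e. p * e" "\<lambda>d. d div p"])
       (use p assms in \<open>auto simp: prime_gt_0_nat\<close>)
  also have "\<dots> = (\<Sum>e | e dvd n div p. if \<not> p dvd e then - mobius e else 0)"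
    using p(1) by (intro sum.cong) (auto simp: mobius_prime_mult mobius_prime_mult_eq_0)
  also have "\<dots> = - (\<Sum>e\<in>A. mobius e)"
  proof -
    have "e dvd n div p \<longleftrightarrow> e dvd n" if "\<not> p dvd e" for e
    proof -
      have "coprime e p" using prime_imp_coprime[OF p(1) that] by (simp add: coprime_commute)
      moreover have "n = p * (n div p)" using p(2) by simp
      ultimately show ?thesis
        by (metis coprime_dvd_mult_right_iff)
    qed
    then have "{e \<in> {e. e dvd n div p}. \<not> p dvd e} = A"
      by (auto simp: A_def)
    moreover have "finite {e. e dvd n div p}"
      using p assms by (auto intro: finite_divisors_nat simp: dvd_div_eq_0_iff)
    ultimately show ?thesis
      by (simp flip: sum.inter_filter add: sum_negf)
  qed
  finally have "(\<Sum>d | d dvd n \<and> p dvd d. mobius d) = - (\<Sum>e\<in>A. mobius e)" .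
  moreover have "(\<Sum>d | d dvd n. mobius d) = (\<Sum>d\<in>A. mobius d) + (\<Sum>d | d dvd n \<and> p dvd d. mobius d)"
    using assms by (subst sum.union_disjoint[symmetric]) (auto simp: A_def intro: sum.cong)
  ultimately show ?thesis using False by simp
qed (simp add: mobius_def)

definition divisor_multiple_pairs :: "nat \<Rightarrow> nat \<Rightarrow> (nat \<times> nat) set" where
  "divisor_multiple_pairs N q = {(d, c). d dvd q \<and> c \<ge> 1 \<and> N dvd c \<and> c * d \<le> q}"

lemma divisor_multiple_pairs_subset:
  assumes "q > 0"
  shows "divisor_multiple_pairs N q \<subseteq> {d. d dvd q} \<times> {1..q}"
proof safe
  fix d c assume "(d, c) \<in> divisor_multiple_pairs N q"
  then have "d dvd q" "c \<ge> 1" "c * d \<le> q"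
    by (auto simp: divisor_multiple_pairs_def)
  moreover have "c \<le> c * d"
    using dvd_pos_nat[OF assms \<open>d dvd q\<close>] by simp
  ultimately show "d dvd q" "c \<in> {1..q}"
    by (auto intro: order.trans[OF \<open>c \<le> c * d\<close>])
qed

lemma finite_divisor_multiple_pairs: "q > 0 \<Longrightarrow> finite (divisor_multiple_pairs N q)"
  by (rule finite_subset[OF divisor_multiple_pairs_subset]) auto

lemma card_divisor_multiple_pairs_le:
  "q > 0 \<Longrightarrow> card (divisor_multiple_pairs N q) \<le> q * card {d. d dvd q}"
  using card_mono[OF _ divisor_multiple_pairs_subset] by (simp add: card_cartesian_product mult.commute)

lemma sum_divisor_multiple_pairs_regroup:
  assumes "q > 0" "N > 0"
  shows "(\<Sum>(d, c)\<in>divisor_multiple_pairs N q. f d) =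
         (\<Sum>(m, d)\<in>(SIGMA m:{m. 1 \<le> m \<and> N * m \<le> q}. {d. d dvd gcd m q}). f d)"
proof (rule sum.reindex_bij_witness[of _ "\<lambda>(m, d). (d, N * (m div d))" "\<lambda>(d, c). (c div N * d, d)"])
  fix a assume "a \<in> divisor_multiple_pairs N q"
  then obtain d c t where a: "a = (d, c)" "d dvd q" "c = N * t" "t \<ge> 1" "N * t * d \<le> q"
    by (auto simp: divisor_multiple_pairs_def)
  have "d > 0" using dvd_pos_nat[OF assms(1) a(2)] .
  show "(\<lambda>(m, d). (d, N * (m div d))) ((\<lambda>(d, c). (c div N * d, d)) a) = a"
    using a assms(2) \<open>d > 0\<close> by simp
  show "(\<lambda>(d, c). (c div N * d, d)) a \<in> (SIGMA m:{m. 1 \<le> m \<and> N * m \<le> q}. {d. d dvd gcd m q})"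
    using a assms(2) \<open>d > 0\<close> by (simp add: mult_ac)
next
  fix b assume "b \<in> (SIGMA m:{m. 1 \<le> m \<and> N * m \<le> q}. {d. d dvd gcd m q})"
  then obtain d s where b: "b = (d * s, d)" "d * s \<ge> 1" "N * (d * s) \<le> q" "d dvd q"
    by auto
  have "d > 0" "s > 0" using b(2) by auto
  show "(\<lambda>(d, c). (c div N * d, d)) ((\<lambda>(m, d). (d, N * (m div d))) b) = b"
    using b assms(2) \<open>d > 0\<close> by simp
  show "(\<lambda>(m, d). (d, N * (m div d))) b \<in> divisor_multiple_pairs N q"
    using b assms(2) \<open>d > 0\<close> \<open>s > 0\<close>
    by (simp add: divisor_multiple_pairs_def mult_ac)
qed auto

lemma sum_mobius_divisor_multiple_pairs:
  assumes "q > 0" "N > 0"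
  shows "(\<Sum>(d, c)\<in>divisor_multiple_pairs N q. mobius d) =
         real (card {m. 1 \<le> m \<and> real m \<le> real q / real N \<and> coprime m q})"
proof -
  define M where "M = {m. 1 \<le> m \<and> N * m \<le> q}"
  have "M \<subseteq> {..q}"
  proof
    fix m assume "m \<in> M"
    then have "m \<le> N * m" "N * m \<le> q" using assms(2) by (auto simp: M_def)
    then show "m \<in> {..q}" by (simp add: order.trans[of m "N * m" q])
  qed
  then have "finite M" by (rule finite_subset) simp
  have "(\<Sum>(d, c)\<in>divisor_multiple_pairs N q. mobius d) = (\<Sum>m\<in>M. \<Sum>d | d dvd gcd m q. mobius d)"
    using sum_divisor_multiple_pairs_regroup[OF assms, of mobius] \<open>finite M\<close> assms(1)
    by (simp add: M_def sum.Sigma)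
  also have "\<dots> = (\<Sum>m\<in>M. if coprime m q then 1 else 0)"
  proof (intro sum.cong refl)
    fix m
    have "gcd m q > 0" using assms(1) by simp
    then show "(\<Sum>d | d dvd gcd m q. mobius d) = (if coprime m q then 1 else 0)"
      by (simp only: sum_mobius_divisors coprime_iff_gcd_eq_1)
  qed
  also have "\<dots> = real (card {m\<in>M. coprime m q})"
    using \<open>finite M\<close> by (simp add: sum.If_cases Int_def conj_commute)
  also have "{m\<in>M. coprime m q} = {m. 1 \<le> m \<and> real m \<le> real q / real N \<and> coprime m q}"
    using assms(2) by (auto simp: M_def pos_le_divide_eq mult.commute simp flip: of_nat_mult)
  finally show ?thesis .
qed

lemma sum_prod_multiplicity_le_prod_sum:
  fixes \<psi> :: "nat \<Rightarrow> nat \<Rightarrow> real"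
  assumes "finite P" "finite Q"
    and Q: "\<And>q. q \<in> Q \<Longrightarrow> q > 0 \<and> prime_factors q \<subseteq> P \<and> (\<forall>p\<in>P. multiplicity p q \<le> K p)"
    and \<psi>: "\<And>p j. \<psi> p j \<ge> 0"
  shows "(\<Sum>q\<in>Q. \<Prod>p\<in>P. \<psi> p (multiplicity p q)) \<le> (\<Prod>p\<in>P. \<Sum>j\<le>K p. \<psi> p j)"
proof -
  define r where "r q = restrict (\<lambda>p. multiplicity p q) P" for q
  have "inj_on r Q"
  proof (rule inj_onI)
    fix a b assume ab: "a \<in> Q" "b \<in> Q" "r a = r b"
    have "multiplicity p a = multiplicity p b" if "prime p" for p
    proof (cases "p \<in> P")
      case True
      then show ?thesis using fun_cong[OF ab(3), of p] by (simp add: r_def)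
    next
      case False
      then have "p \<notin> prime_factors a" "p \<notin> prime_factors b" using Q ab(1,2) by auto
      then show ?thesis using that by (simp add: prime_factors_multiplicity)
    qed
    then show "a = b" using multiplicity_eq_imp_eq[of a b] Q ab(1,2) by simp
  qed
  then have "(\<Sum>q\<in>Q. \<Prod>p\<in>P. \<psi> p (multiplicity p q)) = (\<Sum>e\<in>r ` Q. \<Prod>p\<in>P. \<psi> p (e p))"
    by (rule sum.reindex_cong[OF _ refl, symmetric], intro prod.cong refl) (simp_all add: r_def)
  also have "\<dots> \<le> (\<Sum>e\<in>PiE P (\<lambda>p. {..K p}). \<Prod>p\<in>P. \<psi> p (e p))"
    using assms(1) Q \<psi> by (intro sum_mono2) (auto simp: r_def finite_PiE intro: prod_nonneg)
  also have "\<dots> = (\<Prod>p\<in>P. \<Sum>j\<le>K p. \<psi> p j)"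
    using assms(1) by (simp add: prod_sum_PiE)
  finally show ?thesis .
qed

lemma card_divisors_le:
  fixes n :: nat
  assumes "n > 0"
  shows "card {d. d dvd n} \<le> (\<Prod>p\<in>prime_factors n. Suc (multiplicity p n))"
proof -
  have "d > 0 \<and> prime_factors d \<subseteq> prime_factors n \<and>
        (\<forall>p\<in>prime_factors n. multiplicity p d \<le> multiplicity p n)" if "d dvd n" for d
    using dvd_pos_nat[OF assms that] dvd_prime_factors[of n d] dvd_imp_multiplicity_le[OF that]
          assms that by simp
  then have "(\<Sum>d | d dvd n. \<Prod>p\<in>prime_factors n. 1) \<le> (\<Prod>p\<in>prime_factors n. \<Sum>j\<le>multiplicity p n. 1::real)"
    using assms by (intro sum_prod_multiplicity_le_prod_sum[where \<psi> = "\<lambda>_ _. 1" and K = "\<lambda>p. multiplicity p n"]) auto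
  then have "real (card {d. d dvd n}) \<le> real (\<Prod>p\<in>prime_factors n. Suc (multiplicity p n))"
    by simp
  then show ?thesis
    by (simp only: of_nat_le_iff)
qed

text \<open>The factor at \<open>p\<close> of \<open>wprod k q * q * card {d. d dvd q}\<close> when \<open>p\<close> occurs in \<open>q\<close> exactly \<open>j\<close> times.\<close>

definition local_weight :: "nat \<Rightarrow> nat \<Rightarrow> nat \<Rightarrow> real" where
  "local_weight k p j = (if j = 0 then 1 else real (j + 1) * real p ^ j / (real p ^ k - 1)\<^sup>2)"

lemma local_weight_nonneg: "local_weight k p j \<ge> 0"
  by (simp add: local_weight_def)

lemma wprod_divisor_count_le:
  assumes "q > 0"
  shows "wprod k q * (real q * real (card {d. d dvd q}))
           \<le> (\<Prod>p\<in>prime_factors q. local_weight k p (multiplicity p q))"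
proof -
  have q: "real q = (\<Prod>p\<in>prime_factors q. real p ^ multiplicity p q)"
    using arg_cong[OF prime_factorization_nat[OF assms], of real] by (simp only: of_nat_prod of_nat_power)
  have "real (card {d. d dvd q}) \<le> (\<Prod>p\<in>prime_factors q. real (Suc (multiplicity p q)))"
    using of_nat_mono[OF card_divisors_le[OF assms]] by (simp only: of_nat_prod)
  then have "real q * real (card {d. d dvd q}) \<le> real q * (\<Prod>p\<in>prime_factors q. real (Suc (multiplicity p q)))"
    by (rule mult_left_mono) simp
  then have "wprod k q * (real q * real (card {d. d dvd q})) \<le>
      wprod k q * (real q * (\<Prod>p\<in>prime_factors q. real (Suc (multiplicity p q))))"
    by (rule mult_left_mono[OF _ wprod_nonneg])
  also have "\<dots> = (\<Prod>p\<in>prime_factors q.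
      1 / (real p ^ k - 1)\<^sup>2 * (real p ^ multiplicity p q * real (Suc (multiplicity p q))))"
    unfolding wprod_def q by (simp only: prod.distrib)
  also have "\<dots> = (\<Prod>p\<in>prime_factors q. local_weight k p (multiplicity p q))"
  proof (intro prod.cong refl)
    fix p assume "p \<in> prime_factors q"
    then have "multiplicity p q \<noteq> 0" by (simp add: prime_factors_multiplicity)
    then show "1 / (real p ^ k - 1)\<^sup>2 * (real p ^ multiplicity p q * real (Suc (multiplicity p q)))
               = local_weight k p (multiplicity p q)"
      by (simp add: local_weight_def)
  qed
  finally show ?thesis .
qed

lemma local_weight_le:
  assumes "prime p" "1 \<le> j" "j \<le> k" "k \<ge> 2"
  shows "local_weight k p j \<le> 4 * real (k + 1) / (real p)\<^sup>2"
proof -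
  define x where "x = real p ^ k"
  have "real p \<ge> 2" using prime_ge_2_nat[OF assms(1)] by simp
  then have "(real p)\<^sup>2 \<le> x" and "real p ^ j \<le> x"
    unfolding x_def using assms by (auto intro: power_increasing)
  moreover have "(real p)\<^sup>2 \<ge> 4"
    using power_mono[OF \<open>real p \<ge> 2\<close>, of 2] by simp
  ultimately have "x \<ge> 4" by simp
  have "real (j + 1) * real p ^ j \<le> real (k + 1) * x"
    using assms \<open>real p ^ j \<le> x\<close> by (intro mult_mono) auto
  moreover have "(x / 2)\<^sup>2 \<le> (x - 1)\<^sup>2"
    using \<open>x \<ge> 4\<close> by (intro power_mono) auto
  ultimately have "local_weight k p j \<le> real (k + 1) * x / (x / 2)\<^sup>2"
    using assms(2) \<open>x \<ge> 4\<close> prime_gt_0_nat[OF assms(1)]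
    by (auto simp: local_weight_def x_def intro!: frac_le)
  also have "\<dots> = 4 * real (k + 1) / x"
    using \<open>x \<ge> 4\<close> by (simp add: field_simps power2_eq_square)
  also have "\<dots> \<le> 4 * real (k + 1) / (real p)\<^sup>2"
    using \<open>(real p)\<^sup>2 \<le> x\<close> \<open>x \<ge> 4\<close> prime_gt_0_nat[OF assms(1)]
    by (intro divide_left_mono mult_pos_pos) auto
  finally show ?thesis .
qed

lemma sum_inverse_squares_le:
  assumes "finite P" "0 \<notin> P"
  shows "(\<Sum>n\<in>P. 1 / (real n)\<^sup>2) \<le> pi\<^sup>2 / 6"
proof -
  have inj: "inj_on (\<lambda>n. n - 1) P"
    using assms(2) by (intro inj_onI) (metis Suc_pred' not_gr0)
  have "(\<Sum>n\<in>P. 1 / (real n)\<^sup>2) = (\<Sum>m\<in>(\<lambda>n. n - 1) ` P. 1 / real ((m + 1)\<^sup>2))"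
  proof (subst sum.reindex[OF inj], intro sum.cong refl)
    fix n assume "n \<in> P"
    with assms(2) have "1 \<le> n" by (cases n) auto
    then show "1 / (real n)\<^sup>2 = ((\<lambda>m. 1 / real ((m + 1)\<^sup>2)) \<circ> (\<lambda>n. n - 1)) n"
      by simp
  qed
  also have "\<dots> \<le> (\<Sum>m. 1 / real ((m + 1)\<^sup>2))"
    using assms(1) by (intro sum_le_suminf sums_summable[OF inverse_squares_sums]) auto
  also have "\<dots> = pi\<^sup>2 / 6"
    by (rule sums_unique[OF inverse_squares_sums, symmetric])
  finally show ?thesis .
qed

lemma prod_sum_local_weight_le:
  assumes "k \<ge> 2" "finite P" "\<And>p. p \<in> P \<Longrightarrow> prime p"
  shows "(\<Prod>p\<in>P. \<Sum>j\<le>k. local_weight k p j) \<le> exp (4 * real k * real (k + 1) * pi\<^sup>2 / 6)"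
proof -
  have tail: "(\<Sum>j=1..k. local_weight k p j) \<le> 4 * real k * real (k + 1) * (1 / (real p)\<^sup>2)"
    if "p \<in> P" for p
  proof -
    have "(\<Sum>j=1..k. local_weight k p j) \<le> (\<Sum>j=1..k. 4 * real (k + 1) / (real p)\<^sup>2)"
      using assms(1,3) that by (intro sum_mono local_weight_le) auto
    then show ?thesis by (simp add: field_simps)
  qed
  have "0 \<notin> P" using assms(3) not_prime_0 by blast
  have "(\<Sum>p\<in>P. \<Sum>j=1..k. local_weight k p j) \<le> (\<Sum>p\<in>P. 4 * real k * real (k + 1) * (1 / (real p)\<^sup>2))"
    using tail by (rule sum_mono)
  also have "\<dots> = 4 * real k * real (k + 1) * (\<Sum>p\<in>P. 1 / (real p)\<^sup>2)"
    by (simp only: sum_distrib_left)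
  also have "\<dots> \<le> 4 * real k * real (k + 1) * (pi\<^sup>2 / 6)"
    using assms(2) \<open>0 \<notin> P\<close> by (intro mult_left_mono sum_inverse_squares_le) auto
  finally have sum_le: "(\<Sum>p\<in>P. \<Sum>j=1..k. local_weight k p j) \<le> 4 * real k * real (k + 1) * pi\<^sup>2 / 6"
    by simp
  have "(\<Prod>p\<in>P. \<Sum>j\<le>k. local_weight k p j) = (\<Prod>p\<in>P. 1 + (\<Sum>j=1..k. local_weight k p j))"
    by (intro prod.cong refl)
       (simp add: atMost_atLeast0 sum.atLeast_Suc_atMost local_weight_def)
  also have "\<dots> \<le> exp (\<Sum>p\<in>P. \<Sum>j=1..k. local_weight k p j)"
    by (intro prod_le_exp_sum sum_nonneg local_weight_nonneg)
  also have "\<dots> \<le> exp (4 * real k * real (k + 1) * pi\<^sup>2 / 6)"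
    using sum_le by simp
  finally show ?thesis .
qed

lemma sum_free_wprod_divisor_count_le:
  assumes "k \<ge> 2" "finite Q"
  shows "(\<Sum>q\<in>Q. free_ind (k + 1) q * wprod k q * (real q * real (card {d. d dvd q})))
           \<le> exp (4 * real k * real (k + 1) * pi\<^sup>2 / 6)"
proof -
  define Q' where "Q' = {q\<in>Q. free_ind (k + 1) q = 1}"
  define P where "P = {p. prime p \<and> p \<le> Max (insert 0 Q)}"
  have "finite P" by (simp add: P_def)
  have Q': "q > 0 \<and> prime_factors q \<subseteq> P \<and> (\<forall>p\<in>P. multiplicity p q \<le> k)" if "q \<in> Q'" for q
  proof -
    have "q > 0" "q \<in> Q" "free_ind (k + 1) q = 1"
      using that by (auto simp: Q'_def free_ind_def split: if_splits)
    moreover have "p \<le> Max (insert 0 Q)" if "p \<in> prime_factors q" for p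
      using that \<open>q > 0\<close> \<open>q \<in> Q\<close> assms(2)
      by (intro le_trans[OF dvd_imp_le Max_ge]) auto
    ultimately show ?thesis
      by (auto simp: P_def free_ind_multiplicity_le)
  qed
  have "(\<Sum>q\<in>Q. free_ind (k + 1) q * wprod k q * (real q * real (card {d. d dvd q}))) =
        (\<Sum>q\<in>Q'. wprod k q * (real q * real (card {d. d dvd q})))"
    using assms(2) unfolding Q'_def
    by (subst sum.inter_filter) (auto intro!: sum.cong simp: free_ind_def)
  also have "\<dots> \<le> (\<Sum>q\<in>Q'. \<Prod>p\<in>P. local_weight k p (multiplicity p q))"
  proof (rule sum_mono)
    fix q assume "q \<in> Q'"
    have "wprod k q * (real q * real (card {d. d dvd q}))
            \<le> (\<Prod>p\<in>prime_factors q. local_weight k p (multiplicity p q))"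
      using Q'[OF \<open>q \<in> Q'\<close>] by (intro wprod_divisor_count_le) simp
    also have "\<dots> = (\<Prod>p\<in>P. local_weight k p (multiplicity p q))"
      using Q'[OF \<open>q \<in> Q'\<close>] \<open>finite P\<close>
      by (intro prod.mono_neutral_left) (auto simp: P_def local_weight_def prime_factors_multiplicity)
    finally show "wprod k q * (real q * real (card {d. d dvd q}))
                    \<le> (\<Prod>p\<in>P. local_weight k p (multiplicity p q))" .
  qed
  also have "\<dots> \<le> (\<Prod>p\<in>P. \<Sum>j\<le>k. local_weight k p j)"
    using \<open>finite P\<close> assms(2) Q'
    by (intro sum_prod_multiplicity_le_prod_sum local_weight_nonneg) (auto simp: Q'_def)
  also have "\<dots> \<le> exp (4 * real k * real (k + 1) * pi\<^sup>2 / 6)"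
    using assms(1) \<open>finite P\<close> by (intro prod_sum_local_weight_le) (auto simp: P_def)
  finally show ?thesis .
qed

lemma has_sum_iterated_infsum:
  fixes f :: "'a \<times> 'b \<times> 'c \<Rightarrow> 'd::{banach, uniform_topological_group_add}"
  assumes "(f has_sum S) (SIGMA a:A. SIGMA b:B a. C a b)"
  shows "((\<lambda>a. \<Sum>\<^sub>\<infinity>b\<in>B a. \<Sum>\<^sub>\<infinity>c\<in>C a b. f (a, b, c)) has_sum S) A"
proof (rule has_sum_SigmaD[OF assms])
  fix a assume "a \<in> A"
  have "(\<lambda>(a, y). f (a, y)) summable_on (SIGMA a:A. SIGMA b:B a. C a b)"
    using assms by (auto simp: summable_on_def)
  then have "(\<lambda>y. f (a, y)) summable_on (SIGMA b:B a. C a b)"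
    using summable_on_SigmaD1[of "\<lambda>a y. f (a, y)"] \<open>a \<in> A\<close> by blast
  moreover from this have "(\<Sum>\<^sub>\<infinity>b\<in>B a. \<Sum>\<^sub>\<infinity>c\<in>C a b. f (a, b, c)) = (\<Sum>\<^sub>\<infinity>y\<in>(SIGMA b:B a. C a b). f (a, y))"
    by (rule infsum_Sigma_banach[of "\<lambda>y. f (a, y)", simplified])
  ultimately show "((\<lambda>y. f (a, y)) has_sum (\<Sum>\<^sub>\<infinity>b\<in>B a. \<Sum>\<^sub>\<infinity>c\<in>C a b. f (a, b, c))) (SIGMA b:B a. C a b)"
    by simp
qed

lemma sum_norm_mobius_free_wprod_le:
  assumes "k \<ge> 2" "finite Q" "Q \<subseteq> {1..}"
  shows "(\<Sum>(q, d, c)\<in>(SIGMA q:Q. divisor_multiple_pairs N q). norm (mobius d * free_ind (k + 1) q * wprod k q))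
           \<le> exp (4 * real k * real (k + 1) * pi\<^sup>2 / 6)"
proof -
  define w where "w q = free_ind (k + 1) q * wprod k q" for q
  have w_nonneg: "w q \<ge> 0" for q
    by (simp add: w_def free_ind_nonneg wprod_nonneg)
  have fin: "finite (divisor_multiple_pairs N q)" if "q \<in> Q" for q
    using that assms(3) by (intro finite_divisor_multiple_pairs) auto
  have "(\<Sum>(q, d, c)\<in>(SIGMA q:Q. divisor_multiple_pairs N q). norm (mobius d * free_ind (k + 1) q * wprod k q))
          = (\<Sum>q\<in>Q. \<Sum>(d, c)\<in>divisor_multiple_pairs N q. \<bar>mobius d\<bar> * w q)"
    using assms(2) fin
    by (subst sum.Sigma[symmetric]) (auto simp: w_def abs_mult free_ind_nonneg wprod_nonneg case_prod_unfold mult.assoc)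
  also have "\<dots> \<le> (\<Sum>q\<in>Q. \<Sum>(d, c)\<in>divisor_multiple_pairs N q. w q)"
    using abs_mobius_le w_nonneg
    by (intro sum_mono) (simp add: case_prod_beta mult_left_le_one_le)
  also have "\<dots> = (\<Sum>q\<in>Q. w q * real (card (divisor_multiple_pairs N q)))"
    by (simp add: mult.commute)
  also have "\<dots> \<le> (\<Sum>q\<in>Q. w q * (real q * real (card {d. d dvd q})))"
  proof (intro sum_mono mult_left_mono w_nonneg)
    fix q assume "q \<in> Q"
    then have "card (divisor_multiple_pairs N q) \<le> q * card {d. d dvd q}"
      using assms(3) by (intro card_divisor_multiple_pairs_le) auto
    then show "real (card (divisor_multiple_pairs N q)) \<le> real q * real (card {d. d dvd q})"
      by (simp flip: of_nat_mult)
  qed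
  also have "\<dots> \<le> exp (4 * real k * real (k + 1) * pi\<^sup>2 / 6)"
    unfolding w_def by (rule sum_free_wprod_divisor_count_le[OF assms(1,2)])
  finally show ?thesis .
qed

lemma summable_on_mobius_free_wprod:
  assumes "k \<ge> 2"
  shows "(\<lambda>(q, d, c). mobius d * free_ind (k + 1) q * wprod k q) summable_on
           (SIGMA q:{1..}. divisor_multiple_pairs N q)"
    (is "?g summable_on ?Y")
proof -
  have "(\<lambda>x. norm (?g x)) summable_on ?Y"
  proof (rule nonneg_bdd_above_summable_on[OF norm_ge_zero], rule bdd_aboveI2)
    fix F assume "F \<in> {F. F \<subseteq> ?Y \<and> finite F}"
    then have "F \<subseteq> ?Y" "finite F" by auto
    define Q where "Q = fst ` F"
    have "finite Q" "Q \<subseteq> {1..}" using \<open>F \<subseteq> ?Y\<close> \<open>finite F\<close> by (auto simp: Q_def)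
    have "F \<subseteq> (SIGMA q:Q. divisor_multiple_pairs N q)"
    proof safe
      fix q d c assume "(q, d, c) \<in> F"
      then show "q \<in> Q" unfolding Q_def by (rule image_eqI[rotated]) simp
      show "(d, c) \<in> divisor_multiple_pairs N q" using \<open>(q, d, c) \<in> F\<close> \<open>F \<subseteq> ?Y\<close> by blast
    qed
    moreover have "finite (SIGMA q:Q. divisor_multiple_pairs N q)"
      using \<open>finite Q\<close> \<open>Q \<subseteq> {1..}\<close> by (intro finite_SigmaI finite_divisor_multiple_pairs) auto
    ultimately have "(\<Sum>x\<in>F. norm (?g x)) \<le> (\<Sum>x\<in>(SIGMA q:Q. divisor_multiple_pairs N q). norm (?g x))"
      by (intro sum_mono2) auto
    also have "\<dots> \<le> exp (4 * real k * real (k + 1) * pi\<^sup>2 / 6)"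
      using sum_norm_mobius_free_wprod_le[OF assms \<open>finite Q\<close> \<open>Q \<subseteq> {1..}\<close>, of N]
      by (simp add: case_prod_unfold)
    finally show "(\<Sum>x\<in>F. norm (?g x)) \<le> exp (4 * real k * real (k + 1) * pi\<^sup>2 / 6)" .
  qed
  then show ?thesis
    using summable_on_iff_abs_summable_on_real by blast
qed

lemma has_sum_Ztilde:
  assumes "k \<ge> 2" "N \<ge> 1"
  shows "((\<lambda>(q, d, c). mobius d * free_ind (k + 1) q * wprod k q) has_sum Ztilde k N)
           (SIGMA q:{1..}. divisor_multiple_pairs N q)"
proof -
  let ?g = "\<lambda>(q, d, c). mobius d * free_ind (k + 1) q * wprod k q"
  define S where "S = infsum ?g (SIGMA q:{1..}. divisor_multiple_pairs N q)"
  have S: "(?g has_sum S) (SIGMA q:{1..}. divisor_multiple_pairs N q)"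
    unfolding S_def using summable_on_mobius_free_wprod[OF assms(1)] by (rule has_sum_infsum)
  have "((\<lambda>y. ?g (q, y)) has_sum free_ind (k + 1) q * wprod k q *
          real (card {m. 1 \<le> m \<and> real m \<le> real q / real N \<and> coprime m q}))
          (divisor_multiple_pairs N q)" if "q \<in> {1..}" for q
  proof (rule has_sum_finiteI)
    show "finite (divisor_multiple_pairs N q)"
      using that by (intro finite_divisor_multiple_pairs) auto
    have "(\<Sum>y\<in>divisor_multiple_pairs N q. ?g (q, y)) =
          (\<Sum>(d, c)\<in>divisor_multiple_pairs N q. mobius d) * (free_ind (k + 1) q * wprod k q)"
      by (simp add: sum_distrib_right case_prod_beta mult.assoc)
    also have "\<dots> = free_ind (k + 1) q * wprod k q *
                     real (card {m. 1 \<le> m \<and> real m \<le> real q / real N \<and> coprime m q})"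
      using that assms(2) by (simp add: sum_mobius_divisor_multiple_pairs)
    finally show "free_ind (k + 1) q * wprod k q *
                    real (card {m. 1 \<le> m \<and> real m \<le> real q / real N \<and> coprime m q}) =
                  (\<Sum>y\<in>divisor_multiple_pairs N q. ?g (q, y))" by simp
  qed
  then have "((\<lambda>q. free_ind (k + 1) q * wprod k q *
               real (card {m. 1 \<le> m \<and> real m \<le> real q / real N \<and> coprime m q})) has_sum S) {1..}"
    by (rule has_sum_SigmaD[OF S])
  then have "Ztilde k N = S"
    unfolding Ztilde_def by (rule infsumI)
  with S show ?thesis by simp
qed

lemma bij_betw_divisor_multiple_pairs:
  "bij_betw (\<lambda>(c, r, d). (d * r, d, c))
     (SIGMA c:{c. c \<ge> 1 \<and> N dvd c}. SIGMA r:{r. r \<ge> 1 \<and> r \<ge> c}. {1..})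
     (SIGMA q:{1..}. divisor_multiple_pairs N q)"
proof (rule bij_betw_byWitness[where f' = "\<lambda>(q, d, c). (c, q div d, d)"])
  show "\<forall>x\<in>(SIGMA c:{c. c \<ge> 1 \<and> N dvd c}. SIGMA r:{r. r \<ge> 1 \<and> r \<ge> c}. {1..}).
          (\<lambda>(q, d, c). (c, q div d, d)) ((\<lambda>(c, r, d). (d * r, d, c)) x) = x"
    by auto
  show "\<forall>y\<in>(SIGMA q:{1..}. divisor_multiple_pairs N q).
          (\<lambda>(c, r, d). (d * r, d, c)) ((\<lambda>(q, d, c). (c, q div d, d)) y) = y"
    by (auto simp: divisor_multiple_pairs_def)
  show "(\<lambda>(c, r, d). (d * r, d, c)) ` (SIGMA c:{c. c \<ge> 1 \<and> N dvd c}. SIGMA r:{r. r \<ge> 1 \<and> r \<ge> c}. {1..})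
          \<subseteq> (SIGMA q:{1..}. divisor_multiple_pairs N q)"
    by (auto simp: divisor_multiple_pairs_def mult.commute)
  show "(\<lambda>(q, d, c). (c, q div d, d)) ` (SIGMA q:{1..}. divisor_multiple_pairs N q)
          \<subseteq> (SIGMA c:{c. c \<ge> 1 \<and> N dvd c}. SIGMA r:{r. r \<ge> 1 \<and> r \<ge> c}. {1..})"
    by (auto simp: divisor_multiple_pairs_def)
qed

theorem lemma2p2:
  fixes k N :: nat
  assumes "k \<ge> 2" and "N \<ge> 1"
  shows "(zk k has_sum Ztilde k N) {c. c \<ge> 1 \<and> N dvd c}"
proof -
  define F :: "nat \<times> nat \<times> nat \<Rightarrow> real"
    where "F = (\<lambda>(c, r, d). mobius d * free_ind (k + 1) (d * r) * wprod k (d * r))"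
  have "(F has_sum Ztilde k N) (SIGMA c:{c. c \<ge> 1 \<and> N dvd c}. SIGMA r:{r. r \<ge> 1 \<and> r \<ge> c}. {1..})"
    using has_sum_reindex_bij_betw[OF bij_betw_divisor_multiple_pairs, THEN iffD2, OF has_sum_Ztilde[OF assms]]
    by (simp add: F_def case_prod_unfold)
  then have "((\<lambda>c. \<Sum>\<^sub>\<infinity>r\<in>{r. r \<ge> 1 \<and> r \<ge> c}. \<Sum>\<^sub>\<infinity>d\<in>{1..}. F (c, r, d)) has_sum Ztilde k N)
          {c. c \<ge> 1 \<and> N dvd c}"
    by (rule has_sum_iterated_infsum)
  then show ?thesis
    by (simp add: zk_def [abs_def] F_def)
qed

end
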